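(* Let $T>0$, $V>0$, $\alpha_1,\alpha_2\ge0$ with $\alpha_1+\alpha_2=1$. Consider problem (P6): maximize $r$ over $r$, trajectories $x:[0,T]\to\mathbb{R}$ with $|\dot x(t)|\le V$, and scheduling functions $\pi_1,\pi_2:[0,T]\to\{0,1\}$ with $\pi_1(t)+\pi_2(t)\le1$ for all $t$, subject to $\frac1T\int_0^T\pi_k(t)\log_2(1+\bar Ph_k(x(t)))\,dt\ge\alpha_kr$ for $k=1,2$. Then the optimal UAV trajectory of (P6) is a hover-fly-hover trajectory, i.e. of the form $x(t)=x_{\rm I}$ for $t\in[0,t_{\rm I}]$, $x(t)=x_{\rm I}+(t-t_{\rm I})V$ for $t\in(t_{\rm I},T-t_{\rm F})$, $x(t)=x_{\rm F}$ for $t\in[T-t_{\rm F},T]$, with $-D/2\le x_{\rm I}\le x_{\rm F}\le D/2$, $t_{\rm I},t_{\rm F}\ge0$, $t_{\rm I}+(x_{\rm F}-x_{\rm I})/V+t_{\rm F}=T$. Furthermore: (1) if $-D/2<x_{\rm I}\le x_{\rm F}<D/2$, then $t_{\rm I}=t_{\rm F}=0$ and $VT=x_{\rm F}-x_{\rm I}$; (2) if $-D/2=x_{\rm I}\le x_{\rm F}<D/2$, then $t_{\rm I}=T-\frac{x_{\rm F}-x_{\rm I}}{V}$ and $t_{\rm F}=0$; (3) if $-D/2<x_{\rm I}\le x_{\rm F}=D/2$, then $t_{\rm I}=0$ and $t_{\rm F}=T-\frac{x_{\rm F}-x_{\rm I}}{V}$; (4) if $-D/2=x_{\rm I}<x_{\rm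 F}=D/2$, then $t_{\rm I}+t_{\rm F}+\frac DV=T$.
   Context: Fix $D>0$, $H>0$, $\beta_0>0$, $\bar P>0$. Ground users GU 1, GU 2 are at horizontal positions $x_1=-D/2$, $x_2=D/2$; for UAV horizontal position $x$ (altitude $H$), $h_k(x)=\beta_0/((x-x_k)^2+H^2)$. In (P6) the UAV uses TDMA: $\pi_k(t)=1$ means GU $k$ is served at time $t$ with the full power $\bar P$. *)

theory Defs
  imports "HOL-Analysis.Analysis"
begin

definition gu_pos :: "real \<Rightarrow> nat \<Rightarrow> real" where
  "gu_pos D k = (if k = 1 then - D / 2 else D / 2)"

definition chan_gain :: "real \<Rightarrow> real \<Rightarrow> real \<Rightarrow> nat \<Rightarrow> real \<Rightarrow> real" where
  "chan_gain D H beta0 k x = beta0 / ((x - gu_pos D k)^2 + H^2)"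

definition avg_rate :: "real \<Rightarrow> real \<Rightarrow> real \<Rightarrow> real \<Rightarrow> real \<Rightarrow> nat \<Rightarrow>
    (real \<Rightarrow> real) \<Rightarrow> (real \<Rightarrow> real) \<Rightarrow> real" where
  "avg_rate D H beta0 P T k x sch =
     (1 / T) * integral {0..T} (\<lambda>t. sch t * log 2 (1 + P * chan_gain D H beta0 k (x t)))"

text \<open>Feasibility for problem (P6). The speed constraint |x'(t)| \<le> V is read as
  V-Lipschitz continuity of x on [0,T] (so kinked trajectories are admissible).\<close>
definition feasible_P6 :: "real \<Rightarrow> real \<Rightarrow> real \<Rightarrow> real \<Rightarrow> real \<Rightarrow> real \<Rightarrow> real \<Rightarrow> real \<Rightarrow>
    real \<Rightarrow> (real \<Rightarrow> real) \<Rightarrow> (real \<Rightarrow> real) \<Rightarrow> (real \<Rightarrow> real) \<Rightarrow> bool" where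
  "feasible_P6 D H beta0 P T V a1 a2 r x pi1 pi2 \<longleftrightarrow>
     (\<forall>s\<in>{0..T}. \<forall>t\<in>{0..T}. \<bar>x t - x s\<bar> \<le> V * \<bar>t - s\<bar>) \<and>
     (\<forall>t\<in>{0..T}. pi1 t \<in> {0, 1} \<and> pi2 t \<in> {0, 1} \<and> pi1 t + pi2 t \<le> 1) \<and>
     (\<lambda>t. pi1 t * log 2 (1 + P * chan_gain D H beta0 1 (x t))) integrable_on {0..T} \<and>
     (\<lambda>t. pi2 t * log 2 (1 + P * chan_gain D H beta0 2 (x t))) integrable_on {0..T} \<and>
     avg_rate D H beta0 P T 1 x pi1 \<ge> a1 * r \<and>
     avg_rate D H beta0 P T 2 x pi2 \<ge> a2 * r"

definition hfh :: "real \<Rightarrow> real \<Rightarrow> real \<Rightarrow> (real \<Rightarrow> real) \<Rightarrow> real \<Rightarrow> real \<Rightarrow> real \<Rightarrow> real \<Rightarrow> bool" where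
  "hfh D T V x xI xF tI tF \<longleftrightarrow>
     - D / 2 \<le> xI \<and> xI \<le> xF \<and> xF \<le> D / 2 \<and> tI \<ge> 0 \<and> tF \<ge> 0 \<and>
     tI + (xF - xI) / V + tF = T \<and>
     (\<forall>t\<in>{0..tI}. x t = xI) \<and>
     (\<forall>t\<in>{tI<..<T - tF}. x t = xI + (t - tI) * V) \<and>
     (\<forall>t\<in>{T - tF..T}. x t = xF)"

end

theory Submission
  imports Defs
begin

text \<open>
  A feasible trajectory x with TDMA schedule is dominated by a ramp: the UAV hovers above GU 1
  until a start time s, flies towards GU 2 at full speed V and hovers above it, serving GU 1 up
  to a switching time \<tau> and GU 2 afterwards. Since the rate is a decreasing function of the
  distance to the served user, by the layer cake formula it suffices that for every distance c
  the ramp spends at least as much scheduled time within distance c of each user as x does.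
  Taking for \<tau> the total time x serves GU 1, this holds as soon as x serves GU 1 within
  distance c for at most s + c / V and GU 2 within distance c for at most T - s - (D - c) / V.
  Such an s exists because a V-Lipschitz path needs time (D - c1 - c2) / V to get from
  distance c1 of GU 1 to distance c2 of GU 2, during which it serves neither user that closely.
  The rates of ramps depend continuously on (s, \<tau>) ranging over a compact set, so an optimal
  ramp exists, and every ramp is a hover-fly-hover trajectory.
\<close>

section \<open>Superlevel sets and the layer cake formula\<close>

lemma sigma_finite_measure_lebesgue: "sigma_finite_measure (lebesgue :: 'a::euclidean_space measure)"
proof
  obtain A :: "'a set set" where A: "countable A" "A \<subseteq> sets lborel" "\<Union>A = space lborel"
      "\<forall>a\<in>A. emeasure lborel a \<noteq> \<infinity>"
    using lborel.sigma_finite_countable by metis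
  then show "\<exists>A::'a set set. countable A \<and> A \<subseteq> sets lebesgue \<and> \<Union>A = space lebesgue \<and>
      (\<forall>a\<in>A. emeasure lebesgue a \<noteq> \<infinity>)"
    by (intro exI[of _ A]) auto
qed

lemma nn_integral_layer_cake:
  fixes f :: "'a::euclidean_space \<Rightarrow> real"
  assumes f: "f \<in> borel_measurable lebesgue" and nonneg: "\<And>x. 0 \<le> f x"
  shows "(\<integral>\<^sup>+x. f x \<partial>lebesgue) =
    (\<integral>\<^sup>+u. indicator {0..} u * emeasure lebesgue {x. u < f x} \<partial>lborel)"
proof -
  interpret pair_sigma_finite "lebesgue :: 'a measure" "lborel :: real measure"
    unfolding pair_sigma_finite_def using sigma_finite_measure_lebesgue sigma_finite_lborel by blast
  define E where "E = {(x, u). 0 \<le> u \<and> u < f x}"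
  have E_sets: "E \<in> sets (lebesgue \<Otimes>\<^sub>M lborel)"
  proof -
    have "E = {p \<in> space (lebesgue \<Otimes>\<^sub>M lborel). 0 \<le> snd p \<and> snd p < f (fst p)}"
      by (auto simp: E_def space_pair_measure)
    also have "\<dots> \<in> sets (lebesgue \<Otimes>\<^sub>M lborel)"
      using f by measurable
    finally show ?thesis .
  qed
  have superlevel: "{x. u < f x} \<in> sets lebesgue" for u
    using f by (simp add: borel_measurable_iff_greater)
  have "(\<integral>\<^sup>+x. f x \<partial>lebesgue) = (\<integral>\<^sup>+x. (\<integral>\<^sup>+u. indicator E (x, u) \<partial>lborel) \<partial>lebesgue)"
  proof (rule nn_integral_cong)
    fix x
    have "(\<integral>\<^sup>+u. indicator E (x, u) \<partial>lborel) = (\<integral>\<^sup>+u. indicator {0..<f x} u \<partial>lborel)"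
      by (rule nn_integral_cong) (auto simp: E_def indicator_def)
    then show "ennreal (f x) = (\<integral>\<^sup>+u. indicator E (x, u) \<partial>lborel)"
      using nonneg[of x] by simp
  qed
  also have "\<dots> = (\<integral>\<^sup>+u. (\<integral>\<^sup>+x. indicator E (x, u) \<partial>lebesgue) \<partial>lborel)"
    using Fubini'[of "\<lambda>x u. indicator E (x, u)"] E_sets
    by (simp add: borel_measurable_indicator split_beta')
  also have "\<dots> = (\<integral>\<^sup>+u. indicator {0..} u * emeasure lebesgue {x. u < f x} \<partial>lborel)"
  proof (rule nn_integral_cong)
    fix u :: real
    have "(\<integral>\<^sup>+x. indicator E (x, u) \<partial>lebesgue) =
        (\<integral>\<^sup>+x. indicator {0..} u * indicator {x. u < f x} x \<partial>lebesgue)"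
      by (rule nn_integral_cong) (auto simp: E_def indicator_def)
    then show "(\<integral>\<^sup>+x. indicator E (x, u) \<partial>lebesgue) =
        indicator {0..} u * emeasure lebesgue {x. u < f x}"
      using superlevel by (simp add: nn_integral_cmult)
  qed
  finally show ?thesis .
qed

lemma nn_integral_mono_superlevel:
  fixes f g :: "'a::euclidean_space \<Rightarrow> real"
  assumes "f \<in> borel_measurable lebesgue" "\<And>x. 0 \<le> f x"
    and "g \<in> borel_measurable lebesgue" "\<And>x. 0 \<le> g x"
    and "\<And>u. 0 \<le> u \<Longrightarrow> emeasure lebesgue {x. u < f x} \<le> emeasure lebesgue {x. u < g x}"
  shows "(\<integral>\<^sup>+x. f x \<partial>lebesgue) \<le> (\<integral>\<^sup>+x. g x \<partial>lebesgue)"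
  unfolding nn_integral_layer_cake[OF assms(1,2)] nn_integral_layer_cake[OF assms(3,4)]
  using assms(5) by (intro nn_integral_mono) (simp add: indicator_def)

lemma integral_le_of_superlevel_measures:
  fixes g h :: "'a::euclidean_space \<Rightarrow> real"
  assumes g: "g integrable_on S" "\<And>t. t \<in> S \<Longrightarrow> 0 \<le> g t"
    and h: "h integrable_on T" "\<And>t. t \<in> T \<Longrightarrow> 0 \<le> h t"
    and superlevel: "\<And>u. 0 \<le> u \<Longrightarrow>
      emeasure lebesgue {t. u < indicator S t * g t} \<le> emeasure lebesgue {t. u < indicator T t * h t}"
  shows "integral S g \<le> integral T h"
proof -
  have "(\<lambda>t. indicator S t * g t) \<in> borel_measurable lebesgue"
    "(\<lambda>t. indicator T t * h t) \<in> borel_measurable lebesgue"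
    using has_integral_implies_lebesgue_measurable_real[OF integrable_integral[OF g(1)]]
      has_integral_implies_lebesgue_measurable_real[OF integrable_integral[OF h(1)]]
    by (simp_all add: mult.commute)
  moreover have "0 \<le> indicator S t * g t" "0 \<le> indicator T t * h t" for t
    using g(2)[of t] h(2)[of t] by (simp_all add: indicator_def)
  ultimately have "(\<integral>\<^sup>+t. indicator S t * g t \<partial>lebesgue) \<le> (\<integral>\<^sup>+t. indicator T t * h t \<partial>lebesgue)"
    using superlevel by (intro nn_integral_mono_superlevel)
  moreover have "(\<integral>\<^sup>+t. indicator S t * g t \<partial>lebesgue) = ennreal (integral S g)"
    unfolding nn_integral_completion using g by (intro nn_integral_has_integral_lebesgue integrable_integral)
  moreover have "(\<integral>\<^sup>+t. indicator T t * h t \<partial>lebesgue) = ennreal (integral T h)"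
    unfolding nn_integral_completion using h by (intro nn_integral_has_integral_lebesgue integrable_integral)
  moreover have "0 \<le> integral T h"
    using h by (rule integral_nonneg)
  ultimately show ?thesis
    by (simp add: ennreal_le_iff)
qed

lemma measure_disjoint_add_le:
  assumes "A \<in> sets M" "B \<in> sets M" "A \<inter> B = {}" "A \<union> B \<subseteq> C" "C \<in> fmeasurable M"
  shows "measure M A + measure M B \<le> measure M C"
proof -
  have "A \<in> fmeasurable M" "B \<in> fmeasurable M"
    using assms by (auto intro: fmeasurableI2)
  then have "measure M (A \<union> B) = measure M A + measure M (B - A)"
    by (rule measure_Un2)
  moreover have "B - A = B" using assms(3) by blast
  moreover have "measure M (A \<union> B) \<le> measure M C"
    using assms by (intro measure_mono_fmeasurable) auto
  ultimately show ?thesis by simp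
qed

lemma sets_lebesgue_continuous_vimage_open:
  fixes f :: "'a::euclidean_space \<Rightarrow> 'b::topological_space"
  assumes "continuous_on C f" "closed C" "open U"
  shows "{t \<in> C. f t \<in> U} \<in> sets lebesgue"
proof -
  obtain A where "open A" "C \<inter> f -` U = C \<inter> A"
    using continuous_openin_preimage_gen[OF assms(1,3)] by (auto simp: openin_open)
  then have "{t \<in> C. f t \<in> U} = C \<inter> A" by blast
  also have "\<dots> \<in> sets lebesgue"
    using assms(2) \<open>open A\<close> by (intro sets.Int) (auto intro: lebesgue_closedin lebesgue_openin)
  finally show ?thesis .
qed

lemma sets_lebesgue_abs_less:
  fixes f :: "real \<Rightarrow> real"
  assumes "continuous_on {a..b} f" "S \<in> sets lebesgue" "S \<subseteq> {a..b}"
  shows "{t \<in> S. \<bar>f t\<bar> < c} \<in> sets lebesgue"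
proof -
  have "{t \<in> {a..b}. \<bar>f t\<bar> \<in> {..<c}} \<in> sets lebesgue"
    using assms(1) by (intro sets_lebesgue_continuous_vimage_open continuous_on_rabs) auto
  then have "S \<inter> {t \<in> {a..b}. \<bar>f t\<bar> \<in> {..<c}} \<in> sets lebesgue"
    by (rule sets.Int[OF assms(2)])
  moreover have "S \<inter> {t \<in> {a..b}. \<bar>f t\<bar> \<in> {..<c}} = {t \<in> S. \<bar>f t\<bar> < c}"
    using assms(3) by auto
  ultimately show ?thesis by metis
qed

section \<open>Crossing times of Lipschitz paths\<close>

lemma lipschitz_crossing_ordered:
  fixes x :: "real \<Rightarrow> real"
  assumes lip: "V-lipschitz_on {a..b} x" and "a \<le> b" "x a < L" "L < R" "R < x b"
  shows "\<exists>t1 t2. a \<le> t1 \<and> t1 \<le> t2 \<and> t2 \<le> b \<and> (\<forall>t\<in>{t1<..<t2}. L < x t \<and> x t < R) \<and>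
    R - L \<le> V * (t2 - t1)"
proof -
  txt \<open>The last time t1 with x t1 \<le> L and, after it, the first time t2 with R \<le> x t2.\<close>
  have cont: "continuous_on {a..b} x"
    using lip by (rule lipschitz_on_continuous_on)
  have "closed ({a..b} \<inter> x -` {..L})"
    using cont by (intro continuous_closed_preimage) auto
  then have "compact ({a..b} \<inter> x -` {..L})"
    using compact_Int_closed[OF compact_Icc[of a b]] by (metis Int_absorb Int_assoc)
  moreover have "a \<in> {a..b} \<inter> x -` {..L}" using assms by auto
  ultimately obtain t1 where t1: "t1 \<in> {a..b} \<inter> x -` {..L}" "\<forall>t\<in>{a..b} \<inter> x -` {..L}. t \<le> t1"
    using compact_attains_sup by blast
  have "closed ({t1..b} \<inter> x -` {R..})"
    using t1(1) by (intro continuous_closed_preimage continuous_on_subset[OF cont]) auto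
  then have "compact ({t1..b} \<inter> x -` {R..})"
    using compact_Int_closed[OF compact_Icc[of t1 b]] by (metis Int_absorb Int_assoc)
  moreover have "b \<in> {t1..b} \<inter> x -` {R..}" using t1(1) assms by auto
  ultimately obtain t2 where t2: "t2 \<in> {t1..b} \<inter> x -` {R..}" "\<forall>t\<in>{t1..b} \<inter> x -` {R..}. t2 \<le> t"
    using compact_attains_inf by blast
  have between: "L < x t \<and> x t < R" if t: "t \<in> {t1<..<t2}" for t
  proof
    have "t \<in> {a..b}" "t \<in> {t1..b}" using t t1(1) t2(1) by auto
    moreover have "\<not> t \<le> t1" "\<not> t2 \<le> t" using t by auto
    ultimately show "L < x t" "x t < R"
      using t1(2) t2(2) by (meson IntI not_le vimageI atMost_iff atLeast_iff)+
  qed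
  have "dist (x t2) (x t1) \<le> V * dist t2 t1"
    using t1(1) t2(1) by (intro lipschitz_onD[OF lip]) auto
  then have "x t2 - x t1 \<le> V * (t2 - t1)"
    using t1(1) t2(1) by (simp add: dist_real_def)
  then have "R - L \<le> V * (t2 - t1)"
    using t1(1) t2(1) by simp
  moreover have "a \<le> t1" "t1 \<le> t2" "t2 \<le> b" using t1(1) t2(1) by auto
  ultimately show ?thesis
    using between by blast
qed

lemma lipschitz_crossing:
  fixes x :: "real \<Rightarrow> real"
  assumes lip: "V-lipschitz_on {a..b} x" and st: "s \<in> {a..b}" "t \<in> {a..b}"
    and "x s < L" "L < R" "R < x t"
  shows "\<exists>t1 t2. a \<le> t1 \<and> t1 \<le> t2 \<and> t2 \<le> b \<and> (\<forall>t\<in>{t1<..<t2}. L < x t \<and> x t < R) \<and>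
    R - L \<le> V * (t2 - t1)"
proof (cases "s \<le> t")
  case True
  have "V-lipschitz_on {s..t} x"
    using st by (intro lipschitz_on_subset[OF lip]) auto
  from lipschitz_crossing_ordered[OF this True assms(4-6)] obtain t1 t2
    where "s \<le> t1" "t1 \<le> t2" "t2 \<le> t" "\<forall>t\<in>{t1<..<t2}. L < x t \<and> x t < R"
      "R - L \<le> V * (t2 - t1)"
    by blast
  then show ?thesis
    using st by (intro exI[of _ t1] exI[of _ t2]) auto
next
  case False
  have "V-lipschitz_on {t..s} (\<lambda>t. - x t)"
    using st by (intro lipschitz_on_minus lipschitz_on_subset[OF lip]) auto
  moreover have "t \<le> s" "- x t < - R" "- R < - L" "- L < - x s"
    using False assms(4-6) by auto
  ultimately obtain t1 t2 where "t \<le> t1" "t1 \<le> t2" "t2 \<le> s"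
      "\<forall>t\<in>{t1<..<t2}. - R < - x t \<and> - x t < - L" "- L - - R \<le> V * (t2 - t1)"
    using lipschitz_crossing_ordered[of V t s "\<lambda>t. - x t" "- R" "- L"] by blast
  then show ?thesis
    using st by (intro exI[of _ t1] exI[of _ t2]) auto
qed

lemma measure_add_transit_le:
  fixes x :: "real \<Rightarrow> real"
  assumes lip: "V-lipschitz_on {0..T} x" and "0 < V"
    and A: "A \<in> sets lebesgue" "A \<subseteq> {0..T}" "A \<noteq> {}" "\<forall>t\<in>A. x t < L"
    and B: "B \<in> sets lebesgue" "B \<subseteq> {0..T}" "B \<noteq> {}" "\<forall>t\<in>B. R < x t"
    and disj: "A \<inter> B = {}"
  shows "measure lebesgue A + measure lebesgue B + (R - L) / V \<le> T"
proof -
  have "0 \<le> T" using A(2,3) by auto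
  then have measure_0T: "measure lebesgue {0..T} = T" by simp
  show ?thesis
  proof (cases "L < R")
    case False
    have "measure lebesgue A + measure lebesgue B \<le> T"
      using measure_disjoint_add_le[OF A(1) B(1) disj, of "{0..T}"] A(2) B(2) measure_0T by auto
    moreover have "(R - L) / V \<le> 0"
      using False \<open>0 < V\<close> by (simp add: divide_nonpos_pos)
    ultimately show ?thesis by linarith
  next
    case True
    obtain s t where "s \<in> A" "t \<in> B" using A(3) B(3) by blast
    then have "s \<in> {0..T}" "t \<in> {0..T}" "x s < L" "R < x t"
      using A(2,4) B(2,4) by auto
    then obtain t1 t2 where t12: "0 \<le> t1" "t1 \<le> t2" "t2 \<le> T"
        "\<forall>t\<in>{t1<..<t2}. L < x t \<and> x t < R" "R - L \<le> V * (t2 - t1)"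
      using lipschitz_crossing[OF lip _ _ _ True] by blast
    have "A \<in> lmeasurable" "B \<in> lmeasurable"
      using A(1,2) B(1,2) by (auto intro: fmeasurableI2[of "{0..T}"])
    then have "measure lebesgue (A \<union> B) = measure lebesgue A + measure lebesgue B"
      using disj by (intro measure_Union) (auto simp: fmeasurable_def)
    moreover have "(A \<union> B) \<inter> {t1<..<t2} = {}"
      using A(4) B(4) t12(4) by fastforce
    then have "measure lebesgue (A \<union> B) + measure lebesgue {t1<..<t2} \<le> measure lebesgue {0..T}"
      using A(1,2) B(1,2) t12(1-3) by (intro measure_disjoint_add_le) auto
    moreover have "(R - L) / V \<le> t2 - t1"
      using t12(5) \<open>0 < V\<close> by (simp add: divide_le_eq mult.commute)
    ultimately show ?thesis
      using t12(2) measure_0T by simp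
  qed
qed

section \<open>Rate as a function of the distance\<close>

definition dist_rate :: "real \<Rightarrow> real \<Rightarrow> real \<Rightarrow> real \<Rightarrow> real" where
  "dist_rate H beta0 P z = log 2 (1 + P * (beta0 / (z\<^sup>2 + H\<^sup>2)))"

lemma log_rate_chan_gain:
  "log 2 (1 + P * chan_gain D H beta0 k x) = dist_rate H beta0 P (x - gu_pos D k)"
  by (simp add: dist_rate_def chan_gain_def)

context
  fixes H beta0 P :: real
  assumes H: "0 < H" and beta0: "0 < beta0" and P: "0 < P"
begin

lemma dist_rate_pos: "0 < dist_rate H beta0 P z"
proof -
  have "0 < P * (beta0 / (z\<^sup>2 + H\<^sup>2))"
    using H beta0 P by (simp add: add_nonneg_pos)
  then show ?thesis unfolding dist_rate_def by simp
qed

lemma dist_rate_less_iff: "dist_rate H beta0 P c < dist_rate H beta0 P a \<longleftrightarrow> \<bar>a\<bar> < \<bar>c\<bar>"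
proof -
  have denom: "0 < z\<^sup>2 + H\<^sup>2" for z
    using H by (simp add: add_nonneg_pos)
  have "dist_rate H beta0 P c < dist_rate H beta0 P a \<longleftrightarrow>
      P * (beta0 / (c\<^sup>2 + H\<^sup>2)) < P * (beta0 / (a\<^sup>2 + H\<^sup>2))"
    unfolding dist_rate_def using denom beta0 P by (simp add: add_pos_pos)
  also have "\<dots> \<longleftrightarrow> a\<^sup>2 < c\<^sup>2"
    using denom[of a] denom[of c] beta0 P
    by (simp, smt (verit, ccfv_SIG) divide_strict_left_mono zero_less_mult_iff)
  also have "\<dots> \<longleftrightarrow> \<bar>a\<bar> < \<bar>c\<bar>"
    by (simp add: abs_le_square_iff flip: not_le)
  finally show ?thesis .
qed

lemma continuous_on_dist_rate: "continuous_on UNIV (dist_rate H beta0 P)"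
proof -
  have "0 < z\<^sup>2 + H\<^sup>2" "0 < 1 + P * (beta0 / (z\<^sup>2 + H\<^sup>2))" for z
    using H beta0 P by (auto simp: add_nonneg_pos add_pos_pos)
  then show ?thesis
    unfolding dist_rate_def by (intro continuous_intros) (auto dest: less_imp_neq[symmetric])
qed

end

lemma superlevel_indicator_radial:
  fixes G z :: "real \<Rightarrow> real"
  assumes G_pos: "\<And>r. 0 < G r" and G_less_iff: "\<And>a c. G c < G a \<longleftrightarrow> \<bar>a\<bar> < \<bar>c\<bar>" and "0 \<le> c"
  shows "{t. G c < indicator S t * G (z t)} = {t \<in> S. \<bar>z t\<bar> < c}"
  using assms(3) G_pos[of c] G_less_iff[of c] by (auto simp: indicator_def)

lemma emeasure_superlevel_le_of_distance_distribution:
  fixes G z w :: "real \<Rightarrow> real"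
  assumes G_cont: "continuous_on UNIV G" and G_pos: "\<And>r. 0 < G r"
    and G_less_iff: "\<And>a c. G c < G a \<longleftrightarrow> \<bar>a\<bar> < \<bar>c\<bar>"
    and "0 \<le> D" and "0 \<le> u" and S: "S \<in> lmeasurable"
    and z_sets: "\<And>c. 0 < c \<Longrightarrow> {t \<in> S. \<bar>z t\<bar> < c} \<in> sets lebesgue"
    and w_sets: "\<And>c. 0 < c \<Longrightarrow> {t \<in> {a..b}. \<bar>w t\<bar> < c} \<in> sets lebesgue"
    and w_bound: "\<And>t. t \<in> {a..b} \<Longrightarrow> \<bar>w t\<bar> \<le> D"
    and size: "measure lebesgue S \<le> b - a"
    and distribution: "\<And>c. 0 < c \<Longrightarrow> c \<le> D \<Longrightarrow>
      measure lebesgue {t \<in> S. \<bar>z t\<bar> < c} \<le> measure lebesgue {t \<in> {a..b}. \<bar>w t\<bar> < c}"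
  shows "emeasure lebesgue {t. u < indicator S t * G (z t)} \<le>
    emeasure lebesgue {t. u < indicator {a..b} t * G (w t)}"
proof -
  have G_le: "G c \<le> G a" if "\<bar>a\<bar> \<le> \<bar>c\<bar>" for a c
    using that G_less_iff[of a c] by (simp add: not_less)
  consider "G 0 \<le> u" | "u < G D" | c where "0 < c" "c \<le> D" "u = G c"
  proof (cases "G 0 \<le> u \<or> u < G D")
    case False
    then have "G D \<le> u" "u \<le> G 0"
      by auto
    then obtain c where c: "0 \<le> c" "c \<le> D" "G c = u"
      using IVT2'[OF _ _ \<open>0 \<le> D\<close> continuous_on_subset[OF G_cont subset_UNIV]] by blast
    moreover have "c \<noteq> 0" using False c(3) by auto
    ultimately show ?thesis
      by (intro that(3)[of c]) auto
  qed (use that in blast)+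
  then show ?thesis
  proof cases
    case 1
    have "indicator S t * G (z t) \<le> u" for t
      using 1 G_le[of 0 "z t"] G_pos[of 0] by (simp add: indicator_def)
    then have "{t. u < indicator S t * G (z t)} = {}"
      by (simp add: not_less)
    then show ?thesis by simp
  next
    case 2
    have "{t. u < indicator {a..b} t * G (w t)} = {a..b}"
      using 2 \<open>0 \<le> u\<close> G_le[of "w t" D for t] w_bound \<open>0 \<le> D\<close>
      by (force simp: indicator_def)
    moreover have "{t. u < indicator S t * G (z t)} \<subseteq> S"
      using \<open>0 \<le> u\<close> by (auto simp: indicator_def)
    then have "emeasure lebesgue {t. u < indicator S t * G (z t)} \<le> emeasure lebesgue S"
      using S by (intro emeasure_mono) auto
    moreover have "emeasure lebesgue S \<le> emeasure lebesgue {a..b}"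
      using S size measure_nonneg[of lebesgue S] by (simp add: emeasure_eq_measure2)
    ultimately show ?thesis by simp
  next
    case (3 c)
    have "{t \<in> S. \<bar>z t\<bar> < c} \<in> lmeasurable"
      by (rule fmeasurableI2[OF S _ z_sets[OF 3(1)]]) blast
    moreover have "{t \<in> {a..b}. \<bar>w t\<bar> < c} \<in> lmeasurable"
      by (rule fmeasurableI2[OF lmeasurable_interval(1)[of a b] _ w_sets[OF 3(1)]]) blast
    ultimately show ?thesis
      using distribution[OF 3(1,2)]
      unfolding 3(3) superlevel_indicator_radial[OF G_pos G_less_iff less_imp_le[OF 3(1)]]
      by (simp add: emeasure_eq_measure2)
  qed
qed

lemma integral_le_of_distance_distribution:
  fixes G z w :: "real \<Rightarrow> real"
  assumes G_cont: "continuous_on UNIV G" and G_pos: "\<And>r. 0 < G r"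
    and G_less_iff: "\<And>a c. G c < G a \<longleftrightarrow> \<bar>a\<bar> < \<bar>c\<bar>"
    and "0 \<le> D" and S: "S \<in> lmeasurable" and z: "(\<lambda>t. G (z t)) integrable_on S"
    and w: "continuous_on UNIV w" "\<And>t. t \<in> {a..b} \<Longrightarrow> \<bar>w t\<bar> \<le> D"
    and size: "measure lebesgue S \<le> b - a"
    and distribution: "\<And>c. 0 < c \<Longrightarrow> c \<le> D \<Longrightarrow>
      measure lebesgue {t \<in> S. \<bar>z t\<bar> < c} \<le> measure lebesgue {t \<in> {a..b}. \<bar>w t\<bar> < c}"
  shows "integral S (\<lambda>t. G (z t)) \<le> integral {a..b} (\<lambda>t. G (w t))"
proof -
  have "continuous_on {a..b} (\<lambda>t. G (w t))"
    using continuous_on_compose2[OF G_cont w(1)] continuous_on_subset by blast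
  then have w_int: "(\<lambda>t. G (w t)) integrable_on {a..b}"
    by (rule integrable_continuous_real)
  have "(\<lambda>t. G (z t) * indicator S t) \<in> borel_measurable lebesgue"
    using has_integral_implies_lebesgue_measurable_real[OF integrable_integral[OF z]] .
  then have "{t. G c < indicator S t * G (z t)} \<in> sets lebesgue" for c
    by (simp add: borel_measurable_iff_greater mult.commute)
  then have z_sets: "{t \<in> S. \<bar>z t\<bar> < c} \<in> sets lebesgue" if "0 < c" for c
    using superlevel_indicator_radial[OF G_pos G_less_iff less_imp_le[OF that]] by metis
  have w_sets: "{t \<in> {a..b}. \<bar>w t\<bar> < c} \<in> sets lebesgue" for c
    using continuous_on_subset[OF w(1)] by (intro sets_lebesgue_abs_less) auto
  show ?thesis
  proof (rule integral_le_of_superlevel_measures[OF z _ w_int])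
    fix u :: real assume "0 \<le> u"
    show "emeasure lebesgue {t. u < indicator S t * G (z t)} \<le>
        emeasure lebesgue {t. u < indicator {a..b} t * G (w t)}"
      by (rule emeasure_superlevel_le_of_distance_distribution[OF G_cont G_pos G_less_iff
          \<open>0 \<le> D\<close> \<open>0 \<le> u\<close> S z_sets w_sets w(2) size distribution])
  qed (simp_all add: G_pos less_imp_le)
qed

section \<open>Ramp trajectories\<close>

definition ramp :: "real \<Rightarrow> real \<Rightarrow> real \<Rightarrow> real \<Rightarrow> real" where
  "ramp D V s t = - D / 2 + max 0 (min D (V * (t - s)))"

lemma ramp_bounds: "0 \<le> D \<Longrightarrow> - D / 2 \<le> ramp D V s t \<and> ramp D V s t \<le> D / 2"
  by (simp add: ramp_def)

lemma continuous_on_ramp: "continuous_on A (\<lambda>(s, t). ramp D V s t)"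
  unfolding ramp_def split_beta by (intro continuous_intros)

lemma continuous_on_ramp_time: "continuous_on A (ramp D V s)"
  unfolding ramp_def by (intro continuous_intros)

lemma lipschitz_on_ramp:
  assumes "0 \<le> V"
  shows "V-lipschitz_on A (ramp D V s)"
proof (rule lipschitz_onI)
  fix t t'
  have "\<bar>max 0 (min D (V * (t - s))) - max 0 (min D (V * (t' - s)))\<bar> \<le> \<bar>V * (t - s) - V * (t' - s)\<bar>"
    by (auto simp: max_def min_def abs_if)
  also have "\<dots> = V * \<bar>t - t'\<bar>"
    using assms by (simp add: abs_mult flip: right_diff_distrib)
  finally show "dist (ramp D V s t) (ramp D V s t') \<le> V * dist t t'"
    by (simp add: ramp_def dist_real_def)
qed (rule assms)

lemma ramp_near_start:
  assumes "0 < V" "0 < c" "t < s + c / V"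
  shows "\<bar>ramp D V s t + D / 2\<bar> < c"
proof -
  have "V * (t - s) < c"
    using assms by (simp add: field_simps)
  then show ?thesis
    using assms(2) by (simp add: ramp_def)
qed

lemma ramp_near_end:
  assumes "0 < V" "0 \<le> D" "0 < c" "s + (D - c) / V < t"
  shows "\<bar>ramp D V s t - D / 2\<bar> < c"
proof -
  have "D - c < V * (t - s)"
    using assms by (simp add: field_simps)
  then show ?thesis
    using assms(2,3) by (simp add: ramp_def abs_if min_def max_def)
qed

lemma measure_ramp_near_start:
  assumes "0 < V" "0 < c"
  shows "max 0 (min \<tau> (s + c / V)) \<le> measure lebesgue {t \<in> {0..\<tau>}. \<bar>ramp D V s t + D / 2\<bar> < c}"
    (is "_ \<le> measure lebesgue ?A")
proof -
  define m where "m = min \<tau> (s + c / V)"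
  have "?A \<in> sets lebesgue"
    by (intro sets_lebesgue_abs_less continuous_on_add continuous_on_const continuous_on_ramp_time) auto
  then have A: "?A \<in> lmeasurable"
    by (rule fmeasurableI2[OF lmeasurable_interval(1)[of 0 \<tau>], rotated]) blast
  have "{0..<m} \<subseteq> ?A"
  proof
    fix t assume "t \<in> {0..<m}"
    then have "0 \<le> t" "t \<le> \<tau>" "t < s + c / V" by (simp_all add: m_def)
    then show "t \<in> ?A" using ramp_near_start[OF assms] by simp
  qed
  have "max 0 m \<le> measure lebesgue {0..<m}"
    by (cases "0 \<le> m") simp_all
  also have "\<dots> \<le> measure lebesgue ?A"
    using A \<open>{0..<m} \<subseteq> ?A\<close> by (intro measure_mono_fmeasurable) auto
  finally show ?thesis
    unfolding m_def .
qed

lemma measure_ramp_near_end: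
  assumes "0 < V" "0 \<le> D" "0 < c"
  shows "max 0 (min (T - \<tau>) (T - s - (D - c) / V)) \<le>
    measure lebesgue {t \<in> {\<tau>..T}. \<bar>ramp D V s t - D / 2\<bar> < c}"
    (is "_ \<le> measure lebesgue ?A")
proof -
  define m where "m = min (T - \<tau>) (T - s - (D - c) / V)"
  have "?A \<in> sets lebesgue"
    by (intro sets_lebesgue_abs_less continuous_on_diff continuous_on_const continuous_on_ramp_time) auto
  then have A: "?A \<in> lmeasurable"
    by (rule fmeasurableI2[OF lmeasurable_interval(1)[of \<tau> T], rotated]) blast
  have "{T - m<..T} \<subseteq> ?A"
  proof
    fix t assume "t \<in> {T - m<..T}"
    moreover have "m \<le> T - \<tau>" "m \<le> T - s - (D - c) / V" by (simp_all add: m_def)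
    ultimately have "\<tau> \<le> t" "t \<le> T" "s + (D - c) / V < t" by simp_all
    then show "t \<in> ?A" using ramp_near_end[OF assms] by simp
  qed
  have "max 0 m \<le> measure lebesgue {T - m<..T}"
    by (cases "0 \<le> m") simp_all
  also have "\<dots> \<le> measure lebesgue ?A"
    using A \<open>{T - m<..T} \<subseteq> ?A\<close> by (intro measure_mono_fmeasurable) auto
  finally show ?thesis
    unfolding m_def .
qed

lemma has_integral_switch_before:
  fixes F :: "real \<Rightarrow> real"
  assumes "continuous_on {a..b} F" "a \<le> \<tau>" "\<tau> \<le> b"
  shows "((\<lambda>t. of_bool (t \<le> \<tau>) * F t) has_integral integral {a..\<tau>} F) {a..b}"
proof -
  have "continuous_on {a..\<tau>} F"
    using assms continuous_on_subset by fastforce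
  then have "(F has_integral integral {a..\<tau>} F) {a..\<tau>}"
    using integrable_continuous_real by blast
  then have left: "((\<lambda>t. of_bool (t \<le> \<tau>) * F t) has_integral integral {a..\<tau>} F) {a..\<tau>}"
    by (rule has_integral_eq[rotated]) simp
  have right: "((\<lambda>t. of_bool (t \<le> \<tau>) * F t) has_integral 0) {\<tau>..b}"
    by (rule has_integral_spike_finite[of "{\<tau>}" _ _ "\<lambda>t. 0"]) auto
  show ?thesis
    using has_integral_combine[OF assms(2,3) left right] by simp
qed

lemma has_integral_switch_after:
  fixes F :: "real \<Rightarrow> real"
  assumes "continuous_on {a..b} F" "a \<le> \<tau>" "\<tau> \<le> b"
  shows "((\<lambda>t. of_bool (\<tau> < t) * F t) has_integral integral {\<tau>..b} F) {a..b}"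
proof -
  have "continuous_on {\<tau>..b} F"
    using assms continuous_on_subset by fastforce
  then have "(F has_integral integral {\<tau>..b} F) {\<tau>..b}"
    using integrable_continuous_real by blast
  then have right: "((\<lambda>t. of_bool (\<tau> < t) * F t) has_integral integral {\<tau>..b} F) {\<tau>..b}"
    by (rule has_integral_spike_finite[of "{\<tau>}", rotated 2]) auto
  have left: "((\<lambda>t. of_bool (\<tau> < t) * F t) has_integral 0) {a..\<tau>}"
    by (rule has_integral_eq[of _ "\<lambda>t. 0"]) auto
  show ?thesis
    using has_integral_combine[OF assms(2,3) left right] by simp
qed

section \<open>Domination by a ramp\<close>

lemma schedule_integral:
  fixes p g :: "real \<Rightarrow> real"
  assumes p: "\<forall>t\<in>{a..b}. p t \<in> {0, 1}" and g: "\<And>t. 0 < g t"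
    and int: "(\<lambda>t. p t * g t) integrable_on {a..b}"
  defines "S \<equiv> {t \<in> {a..b}. p t = 1}"
  shows "S \<in> lmeasurable" "g integrable_on S" "integral {a..b} (\<lambda>t. p t * g t) = integral S g"
proof -
  have restrict: "p t * g t = (if t \<in> S then g t else 0)" if "t \<in> {a..b}" for t
    using that p by (auto simp: S_def)
  have S_sub: "S \<subseteq> {a..b}" and S_Int: "S \<inter> {a..b} = S"
    unfolding S_def by blast+
  have "(\<lambda>t. p t * g t * indicator {a..b} t) \<in> borel_measurable lebesgue"
    using has_integral_implies_lebesgue_measurable_real[OF integrable_integral[OF int]] .
  then have "{t. 0 < p t * g t * indicator {a..b} t} \<in> sets lebesgue"
    by (simp add: borel_measurable_iff_greater)
  moreover have "{t. 0 < p t * g t * indicator {a..b} t} = S"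
  proof (rule set_eqI)
    fix t
    show "t \<in> {t. 0 < p t * g t * indicator {a..b} t} \<longleftrightarrow> t \<in> S"
      using restrict[of t] g[of t] S_sub by (cases "t \<in> {a..b}") auto
  qed
  ultimately have "S \<in> sets lebesgue" by metis
  then show "S \<in> lmeasurable"
    by (rule fmeasurableI2[OF lmeasurable_interval(1)[of a b] S_sub])
  have "(\<lambda>t. if t \<in> S then g t else 0) integrable_on {a..b}"
    by (rule integrable_eq[OF int restrict])
  then show "g integrable_on S"
    using integrable_restrict_Int[of S g "{a..b}"] S_Int by metis
  have "integral {a..b} (\<lambda>t. p t * g t) = integral {a..b} (\<lambda>t. if t \<in> S then g t else 0)"
    by (rule integral_cong) (rule restrict)
  then show "integral {a..b} (\<lambda>t. p t * g t) = integral S g"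
    using integral_restrict_Int[of "{a..b}" S g] S_Int by metis
qed

lemma real_separation_in_interval:
  fixes A B :: "real set"
  assumes "\<forall>a\<in>A. \<forall>b\<in>B. a \<le> b" "\<forall>a\<in>A. a \<le> hi" "\<forall>b\<in>B. lo \<le> b" "lo \<le> hi"
  shows "\<exists>s\<in>{lo..hi}. (\<forall>a\<in>A. a \<le> s) \<and> (\<forall>b\<in>B. s \<le> b)"
proof (cases "A = {}")
  case True
  then show ?thesis using assms by auto
next
  case False
  have "bdd_above A" using assms(2) by (auto simp: bdd_above_def)
  have "Sup A \<le> hi" "\<forall>b\<in>B. Sup A \<le> b"
    using False assms by (auto intro: cSup_least)
  moreover have "\<forall>a\<in>A. a \<le> Sup A"
    using \<open>bdd_above A\<close> by (auto intro: cSup_upper)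
  ultimately show ?thesis
    using assms by (intro bexI[of _ "max lo (Sup A)"]) (auto simp: le_max_iff_disj)
qed

lemma ramp_start_separation:
  fixes F1 F2 :: "real \<Rightarrow> real"
  assumes V: "0 < V" and "0 \<le> D" "0 \<le> T"
    and F_le: "\<And>c. F1 c \<le> T" "\<And>c. F2 c \<le> T"
    and transit: "\<And>c1 c2. 0 < c1 \<Longrightarrow> 0 < c2 \<Longrightarrow> 0 < F1 c1 \<Longrightarrow> 0 < F2 c2 \<Longrightarrow>
      F1 c1 - c1 / V \<le> T - (D - c2) / V - F2 c2"
  shows "\<exists>s\<in>{- D / V..T}. \<forall>c>0.
    (0 < F1 c \<longrightarrow> F1 c \<le> s + c / V) \<and> (0 < F2 c \<longrightarrow> F2 c \<le> T - s - (D - c) / V)"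
proof -
  define lower where "lower = {F1 c - c / V | c. 0 < c \<and> 0 < F1 c}"
  define upper where "upper = {T - (D - c) / V - F2 c | c. 0 < c \<and> 0 < F2 c}"
  have "\<exists>s\<in>{- D / V..T}. (\<forall>a\<in>lower. a \<le> s) \<and> (\<forall>b\<in>upper. s \<le> b)"
  proof (rule real_separation_in_interval)
    show "\<forall>a\<in>lower. \<forall>b\<in>upper. a \<le> b"
      using transit by (auto simp: lower_def upper_def)
    show "\<forall>a\<in>lower. a \<le> T"
    proof
      fix a assume "a \<in> lower"
      then obtain c where "a = F1 c - c / V" "0 < c" by (auto simp: lower_def)
      then show "a \<le> T" using F_le(1)[of c] divide_pos_pos[OF \<open>0 < c\<close> V] by linarith
    qed
    show "\<forall>b\<in>upper. - D / V \<le> b"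
    proof
      fix b assume "b \<in> upper"
      then obtain c where "b = T - (D - c) / V - F2 c" "0 < c" by (auto simp: upper_def)
      moreover have "(D - c) / V = D / V - c / V" by (simp add: diff_divide_distrib)
      ultimately show "- D / V \<le> b" using F_le(2)[of c] divide_pos_pos[OF \<open>0 < c\<close> V] by linarith
    qed
    show "- D / V \<le> T"
      using divide_nonneg_pos[OF \<open>0 \<le> D\<close> V] \<open>0 \<le> T\<close> by linarith
  qed
  then obtain s where "s \<in> {- D / V..T}" "\<forall>a\<in>lower. a \<le> s" "\<forall>b\<in>upper. s \<le> b"
    by blast
  then show ?thesis
    by (intro bexI[of _ s]) (force simp: lower_def upper_def)+
qed

lemma measure_near_users_transit:
  fixes x :: "real \<Rightarrow> real"
  assumes lip: "V-lipschitz_on {0..T} x" and V: "0 < V"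
    and S1: "S1 \<in> sets lebesgue" "S1 \<subseteq> {0..T}" and S2: "S2 \<in> sets lebesgue" "S2 \<subseteq> {0..T}"
    and disj: "S1 \<inter> S2 = {}"
    and near: "0 < measure lebesgue {t \<in> S1. \<bar>x t + D / 2\<bar> < c1}"
      "0 < measure lebesgue {t \<in> S2. \<bar>x t - D / 2\<bar> < c2}"
  shows "measure lebesgue {t \<in> S1. \<bar>x t + D / 2\<bar> < c1} - c1 / V \<le>
    T - (D - c2) / V - measure lebesgue {t \<in> S2. \<bar>x t - D / 2\<bar> < c2}"
proof -
  have x_cont: "continuous_on {0..T} x"
    using lip by (rule lipschitz_on_continuous_on)
  have sets: "{t \<in> S1. \<bar>x t + D / 2\<bar> < c1} \<in> sets lebesgue" "{t \<in> S2. \<bar>x t - D / 2\<bar> < c2} \<in> sets lebesgue"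
    using S1 S2
    by (intro sets_lebesgue_abs_less continuous_on_add continuous_on_diff x_cont continuous_on_const;
        simp)+
  have nonempty: "{t \<in> S1. \<bar>x t + D / 2\<bar> < c1} \<noteq> {}" "{t \<in> S2. \<bar>x t - D / 2\<bar> < c2} \<noteq> {}"
    using near by (metis measure_empty less_irrefl)+
  have bounds: "\<forall>t\<in>{t \<in> S1. \<bar>x t + D / 2\<bar> < c1}. x t < - D / 2 + c1"
    "\<forall>t\<in>{t \<in> S2. \<bar>x t - D / 2\<bar> < c2}. D / 2 - c2 < x t"
    by (auto simp: abs_less_iff)
  have "{t \<in> S1. \<bar>x t + D / 2\<bar> < c1} \<inter> {t \<in> S2. \<bar>x t - D / 2\<bar> < c2} = {}"
    "{t \<in> S1. \<bar>x t + D / 2\<bar> < c1} \<subseteq> {0..T}" "{t \<in> S2. \<bar>x t - D / 2\<bar> < c2} \<subseteq> {0..T}"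
    using disj S1(2) S2(2) by blast+
  then have "measure lebesgue {t \<in> S1. \<bar>x t + D / 2\<bar> < c1} + measure lebesgue {t \<in> S2. \<bar>x t - D / 2\<bar> < c2}
      + (D / 2 - c2 - (- D / 2 + c1)) / V \<le> T"
    using measure_add_transit_le[OF lip V sets(1) _ nonempty(1) bounds(1) sets(2) _ nonempty(2) bounds(2)]
    by blast
  moreover have "(D / 2 - c2 - (- D / 2 + c1)) / V = (D - c2) / V - c1 / V"
    using V by (simp add: field_simps)
  ultimately show ?thesis by linarith
qed

lemma exists_ramp_start:
  fixes x :: "real \<Rightarrow> real"
  assumes lip: "V-lipschitz_on {0..T} x" and V: "0 < V" and "0 \<le> D" "0 \<le> T"
    and S1: "S1 \<in> sets lebesgue" "S1 \<subseteq> {0..T}" and S2: "S2 \<in> sets lebesgue" "S2 \<subseteq> {0..T}"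
    and disj: "S1 \<inter> S2 = {}"
  defines "A1 \<equiv> \<lambda>c. {t \<in> S1. \<bar>x t + D / 2\<bar> < c}" and "A2 \<equiv> \<lambda>c. {t \<in> S2. \<bar>x t - D / 2\<bar> < c}"
  shows "\<exists>s\<in>{- D / V..T}. \<forall>c>0.
    measure lebesgue (A1 c) \<le> max 0 (min (measure lebesgue S1) (s + c / V)) \<and>
    measure lebesgue (A2 c) \<le> max 0 (min (measure lebesgue S2) (T - s - (D - c) / V))"
proof -
  have x_cont: "continuous_on {0..T} x"
    using lip by (rule lipschitz_on_continuous_on)
  have A_sets: "A1 c \<in> sets lebesgue" "A2 c \<in> sets lebesgue" for c
    unfolding A1_def A2_def using S1 S2
    by (intro sets_lebesgue_abs_less continuous_on_add continuous_on_diff x_cont continuous_on_const;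
        simp)+
  have A_sub: "A1 c \<subseteq> S1" "A2 c \<subseteq> S2" for c
    by (auto simp: A1_def A2_def)
  have S_lmeasurable: "S1 \<in> lmeasurable" "S2 \<in> lmeasurable"
    using fmeasurableI2[OF lmeasurable_interval(1)[of 0 T] S1(2) S1(1)]
      fmeasurableI2[OF lmeasurable_interval(1)[of 0 T] S2(2) S2(1)] by blast+
  have A_mono: "measure lebesgue (A1 c) \<le> measure lebesgue S1" "measure lebesgue (A2 c) \<le> measure lebesgue S2"
    for c
    using measure_mono_fmeasurable[OF A_sub(1) A_sets(1) S_lmeasurable(1)]
      measure_mono_fmeasurable[OF A_sub(2) A_sets(2) S_lmeasurable(2)] by blast+
  have "measure lebesgue S1 + measure lebesgue S2 \<le> T"
    using measure_disjoint_add_le[OF S1(1) S2(1) disj, of "{0..T}"] S1(2) S2(2) \<open>0 \<le> T\<close> by simp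
  then have A_le: "measure lebesgue (A1 c) \<le> T" "measure lebesgue (A2 c) \<le> T" for c
    using A_mono[of c] measure_nonneg[of lebesgue S1] measure_nonneg[of lebesgue S2] by linarith+
  have transit: "measure lebesgue (A1 c1) - c1 / V \<le> T - (D - c2) / V - measure lebesgue (A2 c2)"
    if "0 < measure lebesgue (A1 c1)" "0 < measure lebesgue (A2 c2)" for c1 c2
    using measure_near_users_transit[OF lip V S1 S2 disj that[unfolded A1_def A2_def]]
    by (simp add: A1_def A2_def)
  obtain s where s: "s \<in> {- D / V..T}" and start: "\<forall>c>0.
      (0 < measure lebesgue (A1 c) \<longrightarrow> measure lebesgue (A1 c) \<le> s + c / V) \<and>
      (0 < measure lebesgue (A2 c) \<longrightarrow> measure lebesgue (A2 c) \<le> T - s - (D - c) / V)"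
    using ramp_start_separation[OF V \<open>0 \<le> D\<close> \<open>0 \<le> T\<close> A_le transit] by blast
  show ?thesis
  proof (intro bexI[OF _ s] allI impI conjI)
    fix c :: real assume "0 < c"
    show "measure lebesgue (A1 c) \<le> max 0 (min (measure lebesgue S1) (s + c / V))"
      using start \<open>0 < c\<close> A_mono(1)[of c] measure_nonneg[of lebesgue "A1 c"]
      by (cases "0 < measure lebesgue (A1 c)") auto
    show "measure lebesgue (A2 c) \<le> max 0 (min (measure lebesgue S2) (T - s - (D - c) / V))"
      using start \<open>0 < c\<close> A_mono(2)[of c] measure_nonneg[of lebesgue "A2 c"]
      by (cases "0 < measure lebesgue (A2 c)") auto
  qed
qed

lemma ramp_dominates_served_sets:
  fixes G x :: "real \<Rightarrow> real"
  assumes G_cont: "continuous_on UNIV G" and G_pos: "\<And>r. 0 < G r"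
    and G_less_iff: "\<And>a c. G c < G a \<longleftrightarrow> \<bar>a\<bar> < \<bar>c\<bar>"
    and D: "0 < D" and V: "0 < V" and T: "0 \<le> T"
    and lip: "V-lipschitz_on {0..T} x"
    and S1: "S1 \<in> lmeasurable" "(\<lambda>t. G (x t + D / 2)) integrable_on S1" "S1 \<subseteq> {0..T}"
    and S2: "S2 \<in> lmeasurable" "(\<lambda>t. G (x t - D / 2)) integrable_on S2" "S2 \<subseteq> {0..T}"
    and disj: "S1 \<inter> S2 = {}"
  shows "\<exists>s\<in>{- D / V..T}. \<exists>\<tau>\<in>{0..T}.
    integral S1 (\<lambda>t. G (x t + D / 2)) \<le> integral {0..\<tau>} (\<lambda>t. G (ramp D V s t + D / 2)) \<and>
    integral S2 (\<lambda>t. G (x t - D / 2)) \<le> integral {\<tau>..T} (\<lambda>t. G (ramp D V s t - D / 2))"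
proof -
  define \<tau> where "\<tau> = measure lebesgue S1"
  have "\<tau> + measure lebesgue S2 \<le> T"
    using measure_disjoint_add_le[OF fmeasurableD(1)[OF S1(1)] fmeasurableD(1)[OF S2(1)] disj, of "{0..T}"]
      S1(3) S2(3) T by (simp add: \<tau>_def)
  then have \<tau>: "0 \<le> \<tau>" "\<tau> \<le> T" "measure lebesgue S2 \<le> T - \<tau>"
    using measure_nonneg[of lebesgue S1] measure_nonneg[of lebesgue S2] unfolding \<tau>_def by linarith+
  obtain s where s: "s \<in> {- D / V..T}" and start: "\<forall>c>0.
      measure lebesgue {t \<in> S1. \<bar>x t + D / 2\<bar> < c} \<le> max 0 (min \<tau> (s + c / V)) \<and>
      measure lebesgue {t \<in> S2. \<bar>x t - D / 2\<bar> < c} \<le> max 0 (min (measure lebesgue S2) (T - s - (D - c) / V))"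
    using exists_ramp_start[OF lip V less_imp_le[OF D] T fmeasurableD(1)[OF S1(1)] S1(3)
        fmeasurableD(1)[OF S2(1)] S2(3) disj]
    unfolding \<tau>_def by blast
  have w_cont: "continuous_on UNIV (\<lambda>t. ramp D V s t + D / 2)" "continuous_on UNIV (\<lambda>t. ramp D V s t - D / 2)"
    by (intro continuous_on_add continuous_on_diff continuous_on_const continuous_on_ramp_time)+
  have w_bound: "\<bar>ramp D V s t + D / 2\<bar> \<le> D" "\<bar>ramp D V s t - D / 2\<bar> \<le> D" for t
    using ramp_bounds[of D V s t] D by auto
  have near_start: "measure lebesgue {t \<in> S1. \<bar>x t + D / 2\<bar> < c} \<le>
      measure lebesgue {t \<in> {0..\<tau>}. \<bar>ramp D V s t + D / 2\<bar> < c}" if "0 < c" for c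
    using start that measure_ramp_near_start[OF V that, of \<tau> s D] by (meson order_trans)
  have near_end: "measure lebesgue {t \<in> S2. \<bar>x t - D / 2\<bar> < c} \<le>
      measure lebesgue {t \<in> {\<tau>..T}. \<bar>ramp D V s t - D / 2\<bar> < c}" if "0 < c" for c
  proof -
    have "max 0 (min (measure lebesgue S2) (T - s - (D - c) / V)) \<le> max 0 (min (T - \<tau>) (T - s - (D - c) / V))"
      by (intro max.mono min.mono order_refl \<tau>(3))
    then show ?thesis
      using start that measure_ramp_near_end[OF V less_imp_le[OF D] that, of T \<tau> s] by (meson order_trans)
  qed
  have "measure lebesgue S1 \<le> \<tau> - 0"
    by (simp add: \<tau>_def)
  from integral_le_of_distance_distribution[OF G_cont G_pos G_less_iff less_imp_le[OF D] S1(1,2)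
      w_cont(1) w_bound(1) this near_start]
  have "integral S1 (\<lambda>t. G (x t + D / 2)) \<le> integral {0..\<tau>} (\<lambda>t. G (ramp D V s t + D / 2))" .
  moreover from integral_le_of_distance_distribution[OF G_cont G_pos G_less_iff less_imp_le[OF D] S2(1,2)
      w_cont(2) w_bound(2) \<tau>(3) near_end]
  have "integral S2 (\<lambda>t. G (x t - D / 2)) \<le> integral {\<tau>..T} (\<lambda>t. G (ramp D V s t - D / 2))" .
  ultimately show ?thesis
    using s \<tau>(1,2) by (intro bexI[OF _ s] bexI[of _ \<tau>]) auto
qed

lemma ramp_dominates:
  fixes G x p1 p2 :: "real \<Rightarrow> real"
  assumes G_cont: "continuous_on UNIV G" and G_pos: "\<And>r. 0 < G r"
    and G_less_iff: "\<And>a c. G c < G a \<longleftrightarrow> \<bar>a\<bar> < \<bar>c\<bar>"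
    and D: "0 < D" and V: "0 < V" and T: "0 \<le> T"
    and lip: "V-lipschitz_on {0..T} x"
    and sched: "\<forall>t\<in>{0..T}. p1 t \<in> {0, 1} \<and> p2 t \<in> {0, 1} \<and> p1 t + p2 t \<le> 1"
    and int1: "(\<lambda>t. p1 t * G (x t + D / 2)) integrable_on {0..T}"
    and int2: "(\<lambda>t. p2 t * G (x t - D / 2)) integrable_on {0..T}"
  shows "\<exists>s\<in>{- D / V..T}. \<exists>\<tau>\<in>{0..T}.
    integral {0..T} (\<lambda>t. p1 t * G (x t + D / 2)) \<le> integral {0..\<tau>} (\<lambda>t. G (ramp D V s t + D / 2)) \<and>
    integral {0..T} (\<lambda>t. p2 t * G (x t - D / 2)) \<le> integral {\<tau>..T} (\<lambda>t. G (ramp D V s t - D / 2))"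
proof -
  define S1 where "S1 = {t \<in> {0..T}. p1 t = 1}"
  define S2 where "S2 = {t \<in> {0..T}. p2 t = 1}"
  have sched1: "\<forall>t\<in>{0..T}. p1 t \<in> {0, 1}" and sched2: "\<forall>t\<in>{0..T}. p2 t \<in> {0, 1}"
    using sched by blast+
  note S1 = schedule_integral[of 0 T p1 "\<lambda>t. G (x t + D / 2)", OF sched1 G_pos int1, folded S1_def]
  note S2 = schedule_integral[of 0 T p2 "\<lambda>t. G (x t - D / 2)", OF sched2 G_pos int2, folded S2_def]
  have S_sub: "S1 \<subseteq> {0..T}" "S2 \<subseteq> {0..T}"
    by (auto simp: S1_def S2_def)
  have "S1 \<inter> S2 = {}"
  proof (rule equals0I)
    fix t assume "t \<in> S1 \<inter> S2"
    then have "t \<in> {0..T}" "p1 t = 1" "p2 t = 1"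
      by (auto simp: S1_def S2_def)
    then show False
      using sched by fastforce
  qed
  from ramp_dominates_served_sets[OF G_cont G_pos G_less_iff D V T lip S1(1,2) S_sub(1) S2(1,2) S_sub(2) this]
  show ?thesis
    unfolding S1(3) S2(3) .
qed

section \<open>Ramps are hover-fly-hover trajectories\<close>

lemma ramp_eq_scaled:
  assumes "0 < V"
  shows "ramp D V s t = - D / 2 + V * max 0 (min (D / V) (t - s))"
proof -
  have "min D (V * (t - s)) = V * min (D / V) (t - s)"
    using assms by (simp add: min_mult_distrib_left)
  moreover have "max 0 (V * min (D / V) (t - s)) = V * max 0 (min (D / V) (t - s))"
    using assms by (simp add: max_mult_distrib_left)
  ultimately show ?thesis by (simp add: ramp_def)
qed

lemma ramp_endpoints:
  assumes "0 < V" "0 \<le> D" "- D / V \<le> s" "s \<le> T"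
  shows "ramp D V s 0 = - D / 2 + V * max 0 (- s)"
    and "ramp D V s T = - D / 2 + V * min (D / V) (T - s)"
proof -
  have "min (D / V) (0 - s) = - s"
    using assms(3) by simp
  then show "ramp D V s 0 = - D / 2 + V * max 0 (- s)"
    by (simp add: ramp_eq_scaled[OF assms(1)])
  have "0 \<le> min (D / V) (T - s)"
    using assms by (intro min.boundedI) simp_all
  then show "ramp D V s T = - D / 2 + V * min (D / V) (T - s)"
    by (simp add: ramp_eq_scaled[OF assms(1)])
qed

lemma ramp_hover_times:
  assumes V: "0 < V" and "0 \<le> D" "- D / V \<le> s" "s \<le> T"
  shows "- D / 2 < ramp D V s 0 \<Longrightarrow> max 0 s = 0"
    and "ramp D V s T < D / 2 \<Longrightarrow> max 0 (T - s - D / V) = 0"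
proof -
  assume "- D / 2 < ramp D V s 0"
  then have "0 < V * max 0 (- s)"
    by (simp add: ramp_endpoints(1)[OF assms])
  then have "s < 0"
    using V by (auto simp: max_def mult_less_0_iff split: if_splits)
  then show "max 0 s = 0" by simp
next
  assume "ramp D V s T < D / 2"
  then have "V * min (D / V) (T - s) < V * (D / V)"
    using V by (simp add: ramp_endpoints(2)[OF assms])
  then have "T - s < D / V"
    using V by (simp add: min_def split: if_splits)
  then show "max 0 (T - s - D / V) = 0" by simp
qed

lemma hfh_ramp:
  assumes D: "0 < D" and V: "0 < V" and T: "0 \<le> T" and s: "- D / V \<le> s" "s \<le> T"
  shows "hfh D T V (ramp D V s) (ramp D V s 0) (ramp D V s T) (max 0 s) (max 0 (T - s - D / V))"
proof -
  have xI: "ramp D V s 0 = - D / 2 + V * max 0 (- s)"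
    and xF: "ramp D V s T = - D / 2 + V * min (D / V) (T - s)"
    using ramp_endpoints[OF V less_imp_le[OF D] s] by simp_all
  have "(ramp D V s T - ramp D V s 0) / V = min (D / V) (T - s) - max 0 (- s)"
    using V by (simp add: xI xF flip: right_diff_distrib)
  then have duration: "max 0 s + (ramp D V s T - ramp D V s 0) / V + max 0 (T - s - D / V) = T"
    by (simp add: max_def min_def)
  have "max 0 (- s) \<le> min (D / V) (T - s)"
    using s T D V by simp
  then have ordered: "ramp D V s 0 \<le> ramp D V s T"
    using V by (simp add: xI xF mult_left_mono)
  have bounds: "- D / 2 \<le> ramp D V s 0" "ramp D V s T \<le> D / 2"
    using ramp_bounds[of D V s] D by auto
  have hover_start: "\<forall>t\<in>{0..max 0 s}. ramp D V s t = ramp D V s 0"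
    using divide_pos_pos[OF D V] by (auto simp: ramp_eq_scaled[OF V] xI max_def min_def)
  have fly: "\<forall>t\<in>{max 0 s<..<T - max 0 (T - s - D / V)}. ramp D V s t = ramp D V s 0 + (t - max 0 s) * V"
  proof
    fix t assume "t \<in> {max 0 s<..<T - max 0 (T - s - D / V)}"
    then have "0 < t - s" "t - s < D / V" "0 < t"
      by auto
    then show "ramp D V s t = ramp D V s 0 + (t - max 0 s) * V"
      by (simp add: ramp_eq_scaled[OF V] xI max_def algebra_simps)
  qed
  have hover_end: "\<forall>t\<in>{T - max 0 (T - s - D / V)..T}. ramp D V s t = ramp D V s T"
    using divide_pos_pos[OF D V] s by (auto simp: ramp_eq_scaled[OF V] xF max_def min_def)
  show ?thesis
    unfolding hfh_def using bounds ordered duration hover_start fly hover_end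
      max.cobounded1[of 0 s] max.cobounded1[of 0 "T - s - D / V"] by blast
qed

lemma hfh_cases:
  assumes "hfh D T V x xI xF tI tF" "0 < V"
    and hover_start: "- D / 2 < xI \<Longrightarrow> tI = 0" and hover_end: "xF < D / 2 \<Longrightarrow> tF = 0"
  shows "(- D / 2 < xI \<and> xF < D / 2 \<longrightarrow> tI = 0 \<and> tF = 0 \<and> V * T = xF - xI) \<and>
    (- D / 2 = xI \<and> xF < D / 2 \<longrightarrow> tI = T - (xF - xI) / V \<and> tF = 0) \<and>
    (- D / 2 < xI \<and> xF = D / 2 \<longrightarrow> tI = 0 \<and> tF = T - (xF - xI) / V) \<and>
    (- D / 2 = xI \<and> xI < xF \<and> xF = D / 2 \<longrightarrow> tI + tF + D / V = T)"
proof -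
  have duration: "tI + (xF - xI) / V + tF = T"
    using assms(1) by (simp add: hfh_def)
  then have "tI = 0 \<Longrightarrow> tF = 0 \<Longrightarrow> V * T = xF - xI"
    using \<open>0 < V\<close> by (simp add: field_simps)
  then show ?thesis
    using duration hover_start hover_end by auto
qed

section \<open>Existence of an optimal ramp\<close>

text \<open>The largest common rate r with a1 * r \<le> R1 and a2 * r \<le> R2.\<close>

definition common_rate :: "real \<Rightarrow> real \<Rightarrow> real \<Rightarrow> real \<Rightarrow> real" where
  "common_rate a1 a2 R1 R2 =
    (if a1 = 0 then R2 / a2 else if a2 = 0 then R1 / a1 else min (R1 / a1) (R2 / a2))"

lemma le_common_rate:
  assumes "0 \<le> a1" "0 \<le> a2" "a1 + a2 = 1" "a1 * r \<le> R1" "a2 * r \<le> R2"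
  shows "r \<le> common_rate a1 a2 R1 R2"
  using assms by (auto simp: common_rate_def pos_le_divide_eq mult.commute)

lemma common_rate_le:
  assumes "0 \<le> a1" "0 \<le> a2" "a1 + a2 = 1" "0 \<le> R1" "0 \<le> R2"
  shows "a1 * common_rate a1 a2 R1 R2 \<le> R1 \<and> a2 * common_rate a1 a2 R1 R2 \<le> R2"
proof (cases "a1 = 0 \<or> a2 = 0")
  case True
  then show ?thesis using assms by (auto simp: common_rate_def)
next
  case False
  have "a1 * min (R1 / a1) (R2 / a2) \<le> a1 * (R1 / a1)" "a2 * min (R1 / a1) (R2 / a2) \<le> a2 * (R2 / a2)"
    using assms by (intro mult_left_mono; simp)+
  then show ?thesis using False by (simp add: common_rate_def)
qed

lemma continuous_on_common_rate:
  assumes "a1 + a2 = 1" "continuous_on K R1" "continuous_on K R2"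
  shows "continuous_on K (\<lambda>p. common_rate a1 a2 (R1 p) (R2 p))"
  using assms unfolding common_rate_def
  by (cases "a1 = 0"; cases "a2 = 0") (auto intro!: continuous_intros)

lemma integral_upto_eq_min:
  fixes F :: "real \<Rightarrow> real"
  assumes F: "continuous_on UNIV F" and \<tau>: "0 \<le> \<tau>" "\<tau> \<le> T"
  shows "integral {0..\<tau>} F = integral {0..T} (\<lambda>t. F (min t \<tau>)) - (T - \<tau>) * F \<tau>"
proof -
  have "(F has_integral integral {0..\<tau>} F) {0..\<tau>}"
    using integrable_continuous_real[OF continuous_on_subset[OF F subset_UNIV]] by blast
  then have left: "((\<lambda>t. F (min t \<tau>)) has_integral integral {0..\<tau>} F) {0..\<tau>}"
    by (rule has_integral_eq[rotated]) simp
  have "((\<lambda>t. F \<tau>) has_integral ((T - \<tau>) * F \<tau>)) {\<tau>..T}"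
    using has_integral_const_real[of "F \<tau>" \<tau> T] \<tau> by simp
  then have right: "((\<lambda>t. F (min t \<tau>)) has_integral ((T - \<tau>) * F \<tau>)) {\<tau>..T}"
    by (rule has_integral_eq[rotated]) simp
  show ?thesis
    using has_integral_combine[OF \<tau> left right] by (simp add: integral_unique)
qed

text \<open>
  Freezing the integrand beyond the upper limit turns the variable domain of integration into
  the fixed interval [0, T], where continuity in parameters is available.
\<close>

lemma continuous_on_integral_upper_limit:
  fixes F :: "real \<Rightarrow> real \<Rightarrow> real"
  assumes F: "continuous_on UNIV (\<lambda>(s, t). F s t)" and "0 \<le> T"
  shows "continuous_on (UNIV \<times> {0..T}) (\<lambda>p. integral {0..snd p} (F (fst p)))"
proof -
  have F_comp: "continuous_on A (\<lambda>q. F (f q) (g q))"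
    if "continuous_on A f" "continuous_on A g" for A and f g :: "'a::topological_space \<Rightarrow> real"
    using continuous_on_compose2[OF F continuous_on_Pair[OF that] subset_UNIV] by simp
  have "continuous_on ((UNIV \<times> {0..T}) \<times> cbox 0 T) (\<lambda>(p, t). F (fst p) (min t (snd p)))"
    unfolding split_beta by (intro F_comp continuous_intros)
  then have "continuous_on (UNIV \<times> {0..T}) (\<lambda>p. integral {0..T} (\<lambda>t. F (fst p) (min t (snd p))))"
    using integral_continuous_on_param by (fastforce simp: cbox_interval)
  moreover have "continuous_on (UNIV \<times> {0..T}) (\<lambda>p. (T - snd p) * F (fst p) (snd p))"
    by (intro F_comp continuous_intros)
  ultimately have "continuous_on (UNIV \<times> {0..T})
      (\<lambda>p. integral {0..T} (\<lambda>t. F (fst p) (min t (snd p))) - (T - snd p) * F (fst p) (snd p))"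
    by (rule continuous_on_diff)
  moreover have "continuous_on UNIV (F s)" for s
    by (intro F_comp continuous_intros)
  ultimately show ?thesis
    by (elim continuous_on_eq) (auto simp: integral_upto_eq_min)
qed

lemma lipschitz_on_real_iff:
  fixes x :: "real \<Rightarrow> real"
  shows "V-lipschitz_on A x \<longleftrightarrow> 0 \<le> V \<and> (\<forall>s\<in>A. \<forall>t\<in>A. \<bar>x t - x s\<bar> \<le> V * \<bar>t - s\<bar>)"
  unfolding lipschitz_on_def dist_real_def by blast

locale uav_tdma =
  fixes D H beta0 P T V a1 a2 :: real
  assumes D: "0 < D" and H: "0 < H" and beta0: "0 < beta0" and P: "0 < P"
    and T: "0 < T" and V: "0 < V"
    and a1: "0 \<le> a1" and a2: "0 \<le> a2" and a_sum: "a1 + a2 = 1"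
begin

abbreviation rate :: "real \<Rightarrow> real" where
  "rate \<equiv> dist_rate H beta0 P"

lemma log_rate_gu1: "log 2 (1 + P * chan_gain D H beta0 1 x) = rate (x + D / 2)"
  by (simp add: log_rate_chan_gain gu_pos_def)

lemma log_rate_gu2: "log 2 (1 + P * chan_gain D H beta0 2 x) = rate (x - D / 2)"
  by (simp add: log_rate_chan_gain gu_pos_def)

definition ramp_rate1 :: "real \<Rightarrow> real \<Rightarrow> real" where
  "ramp_rate1 s \<tau> = integral {0..\<tau>} (\<lambda>t. rate (ramp D V s t + D / 2)) / T"

definition ramp_rate2 :: "real \<Rightarrow> real \<Rightarrow> real" where
  "ramp_rate2 s \<tau> = integral {\<tau>..T} (\<lambda>t. rate (ramp D V s t - D / 2)) / T"

definition ramp_value :: "real \<Rightarrow> real \<Rightarrow> real" where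
  "ramp_value s \<tau> = common_rate a1 a2 (ramp_rate1 s \<tau>) (ramp_rate2 s \<tau>)"

lemma continuous_on_rate_ramp:
  "continuous_on A (\<lambda>t. rate (ramp D V s t + c))" "continuous_on A (\<lambda>t. rate (ramp D V s t - c))"
proof -
  have "continuous_on A (\<lambda>t. ramp D V s t + c)" for c
    by (intro continuous_on_add continuous_on_const continuous_on_ramp_time)
  then have add: "continuous_on A (\<lambda>t. rate (ramp D V s t + c))" for c
    by (rule continuous_on_compose2[OF continuous_on_dist_rate[OF H beta0 P] _ subset_UNIV])
  show "continuous_on A (\<lambda>t. rate (ramp D V s t + c))"
    by (rule add)
  show "continuous_on A (\<lambda>t. rate (ramp D V s t - c))"
    using add[of "- c"] by simp
qed

lemma continuous_on_rate_ramp_param: "continuous_on A (\<lambda>(s, t). rate (ramp D V s t + c))"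
proof -
  have "continuous_on A (\<lambda>(s, t). ramp D V s t + c)"
    using continuous_on_ramp[of A D V] by (simp add: split_beta continuous_on_add continuous_on_const)
  then show ?thesis
    using continuous_on_compose2[OF continuous_on_dist_rate[OF H beta0 P] _ subset_UNIV] by (simp add: split_beta)
qed

lemma feasible_ramp:
  assumes "0 \<le> \<tau>" "\<tau> \<le> T"
  shows "feasible_P6 D H beta0 P T V a1 a2 (ramp_value s \<tau>) (ramp D V s)
    (\<lambda>t. of_bool (t \<le> \<tau>)) (\<lambda>t. of_bool (\<tau> < t))"
proof -
  have "((\<lambda>t. of_bool (t \<le> \<tau>) * rate (ramp D V s t + D / 2)) has_integral T * ramp_rate1 s \<tau>) {0..T}"
    using has_integral_switch_before[OF continuous_on_rate_ramp(1) assms] T by (simp add: ramp_rate1_def)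
  moreover have "((\<lambda>t. of_bool (\<tau> < t) * rate (ramp D V s t - D / 2)) has_integral T * ramp_rate2 s \<tau>) {0..T}"
    using has_integral_switch_after[OF continuous_on_rate_ramp(2) assms] T by (simp add: ramp_rate2_def)
  moreover have "0 \<le> integral {0..\<tau>} (\<lambda>t. rate (ramp D V s t + D / 2))"
    "0 \<le> integral {\<tau>..T} (\<lambda>t. rate (ramp D V s t - D / 2))"
    using dist_rate_pos[OF H beta0 P]
    by (intro integral_nonneg integrable_continuous_real continuous_on_rate_ramp less_imp_le; simp)+
  then have "0 \<le> ramp_rate1 s \<tau>" "0 \<le> ramp_rate2 s \<tau>"
    using T by (simp_all add: ramp_rate1_def ramp_rate2_def)
  ultimately show ?thesis
    using common_rate_le[OF a1 a2 a_sum] lipschitz_on_ramp[of V "{0..T}" D s] V T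
    unfolding feasible_P6_def avg_rate_def ramp_value_def lipschitz_on_real_iff log_rate_gu1 log_rate_gu2
    by (auto simp: integral_unique)
qed

lemma feasible_le_ramp_value:
  assumes "feasible_P6 D H beta0 P T V a1 a2 r x p1 p2"
  shows "\<exists>s\<in>{- D / V..T}. \<exists>\<tau>\<in>{0..T}. r \<le> ramp_value s \<tau>"
proof -
  have lip: "V-lipschitz_on {0..T} x"
    and sched: "\<forall>t\<in>{0..T}. p1 t \<in> {0, 1} \<and> p2 t \<in> {0, 1} \<and> p1 t + p2 t \<le> 1"
    and int1: "(\<lambda>t. p1 t * rate (x t + D / 2)) integrable_on {0..T}"
    and int2: "(\<lambda>t. p2 t * rate (x t - D / 2)) integrable_on {0..T}"
    and r1: "a1 * r \<le> integral {0..T} (\<lambda>t. p1 t * rate (x t + D / 2)) / T"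
    and r2: "a2 * r \<le> integral {0..T} (\<lambda>t. p2 t * rate (x t - D / 2)) / T"
    using assms V unfolding feasible_P6_def avg_rate_def log_rate_gu1 log_rate_gu2 lipschitz_on_real_iff
    by auto
  obtain s \<tau> where s\<tau>: "s \<in> {- D / V..T}" "\<tau> \<in> {0..T}"
    and dom1: "integral {0..T} (\<lambda>t. p1 t * rate (x t + D / 2)) \<le> integral {0..\<tau>} (\<lambda>t. rate (ramp D V s t + D / 2))"
    and dom2: "integral {0..T} (\<lambda>t. p2 t * rate (x t - D / 2)) \<le> integral {\<tau>..T} (\<lambda>t. rate (ramp D V s t - D / 2))"
    using ramp_dominates[OF continuous_on_dist_rate[OF H beta0 P] dist_rate_pos[OF H beta0 P]
        dist_rate_less_iff[OF H beta0 P] D V less_imp_le[OF T] lip sched int1 int2]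
    by blast
  have "a1 * r \<le> ramp_rate1 s \<tau>" "a2 * r \<le> ramp_rate2 s \<tau>"
    using r1 r2 divide_right_mono[OF dom1, of T] divide_right_mono[OF dom2, of T] T
    unfolding ramp_rate1_def ramp_rate2_def by linarith+
  then show ?thesis
    using s\<tau> le_common_rate[OF a1 a2 a_sum] unfolding ramp_value_def by blast
qed

lemma continuous_on_ramp_value:
  "continuous_on ({- D / V..T} \<times> {0..T}) (\<lambda>p. ramp_value (fst p) (snd p))"
proof -
  have upper: "continuous_on (UNIV \<times> {0..T}) (\<lambda>p. integral {0..snd p} (\<lambda>t. rate (ramp D V (fst p) t + c)))"
    for c
    using continuous_on_integral_upper_limit[OF continuous_on_rate_ramp_param] T by simp
  have upper_minus: "continuous_on (UNIV \<times> {0..T})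
      (\<lambda>p. integral {0..snd p} (\<lambda>t. rate (ramp D V (fst p) t - D / 2)))"
    using upper[of "- D / 2"] by simp
  have "continuous_on (UNIV \<times> {0..T}) (\<lambda>p. (fst p, T))" "(\<lambda>p. (fst p, T)) ` (UNIV \<times> {0..T}) \<subseteq> UNIV \<times> {0..T}"
    using T by (auto intro!: continuous_intros)
  from continuous_on_compose2[OF upper_minus this]
  have whole: "continuous_on (UNIV \<times> {0..T}) (\<lambda>p. integral {0..T} (\<lambda>t. rate (ramp D V (fst p) t - D / 2)))"
    by simp
  have rate1: "continuous_on (UNIV \<times> {0..T}) (\<lambda>p. ramp_rate1 (fst p) (snd p))"
    unfolding ramp_rate1_def using T by (intro continuous_on_divide upper continuous_on_const) auto
  have rate2_eq: "(integral {0..T} (\<lambda>t. rate (ramp D V (fst p) t - D / 2))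
      - integral {0..snd p} (\<lambda>t. rate (ramp D V (fst p) t - D / 2))) / T = ramp_rate2 (fst p) (snd p)"
    if "p \<in> UNIV \<times> {0..T}" for p
  proof -
    have "integral {0..snd p} (\<lambda>t. rate (ramp D V (fst p) t - D / 2))
        + integral {snd p..T} (\<lambda>t. rate (ramp D V (fst p) t - D / 2))
        = integral {0..T} (\<lambda>t. rate (ramp D V (fst p) t - D / 2))"
      using that by (intro Henstock_Kurzweil_Integration.integral_combine integrable_continuous_real
          continuous_on_rate_ramp) auto
    then show ?thesis by (simp add: ramp_rate2_def)
  qed
  have "continuous_on (UNIV \<times> {0..T}) (\<lambda>p. (integral {0..T} (\<lambda>t. rate (ramp D V (fst p) t - D / 2))
      - integral {0..snd p} (\<lambda>t. rate (ramp D V (fst p) t - D / 2))) / T)"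
    using T by (intro continuous_on_divide continuous_on_diff whole upper_minus continuous_on_const) auto
  then have rate2: "continuous_on (UNIV \<times> {0..T}) (\<lambda>p. ramp_rate2 (fst p) (snd p))"
    by (rule continuous_on_eq) (rule rate2_eq)
  show ?thesis
    unfolding ramp_value_def
    by (intro continuous_on_common_rate[OF a_sum] continuous_on_subset[OF rate1]
        continuous_on_subset[OF rate2]) auto
qed

lemma ramp_value_attains_max:
  "\<exists>s\<in>{- D / V..T}. \<exists>\<tau>\<in>{0..T}. \<forall>s'\<in>{- D / V..T}. \<forall>\<tau>'\<in>{0..T}. ramp_value s' \<tau>' \<le> ramp_value s \<tau>"
proof -
  have "(0, 0) \<in> {- D / V..T} \<times> {0..T}"
    using divide_pos_pos[OF D V] T by simp
  then have "{- D / V..T} \<times> {0..T} \<noteq> {}"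
    by blast
  from continuous_attains_sup[OF compact_Times[OF compact_Icc compact_Icc] this continuous_on_ramp_value]
  obtain p where "p \<in> {- D / V..T} \<times> {0..T}"
    and "\<forall>q\<in>{- D / V..T} \<times> {0..T}. ramp_value (fst q) (snd q) \<le> ramp_value (fst p) (snd p)"
    by blast
  then show ?thesis
    by (intro bexI[of _ "fst p"] bexI[of _ "snd p"]) (auto simp: mem_Times_iff)
qed

end

theorem proposition4:
  fixes D H beta0 P T V a1 a2 :: real
  assumes "D > 0" "H > 0" "beta0 > 0" "P > 0" "T > 0" "V > 0"
    and "a1 \<ge> 0" "a2 \<ge> 0" "a1 + a2 = 1"
  shows "\<exists>r x pi1 pi2 xI xF tI tF.
    feasible_P6 D H beta0 P T V a1 a2 r x pi1 pi2 \<and>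
    (\<forall>r' x' pi1' pi2'. feasible_P6 D H beta0 P T V a1 a2 r' x' pi1' pi2' \<longrightarrow> r' \<le> r) \<and>
    hfh D T V x xI xF tI tF \<and>
    (- D / 2 < xI \<and> xF < D / 2 \<longrightarrow> tI = 0 \<and> tF = 0 \<and> V * T = xF - xI) \<and>
    (- D / 2 = xI \<and> xF < D / 2 \<longrightarrow> tI = T - (xF - xI) / V \<and> tF = 0) \<and>
    (- D / 2 < xI \<and> xF = D / 2 \<longrightarrow> tI = 0 \<and> tF = T - (xF - xI) / V) \<and>
    (- D / 2 = xI \<and> xI < xF \<and> xF = D / 2 \<longrightarrow> tI + tF + D / V = T)"
proof -
  interpret uav_tdma D H beta0 P T V a1 a2
    using assms by unfold_locales
  obtain s \<tau> where s: "- D / V \<le> s" "s \<le> T" and \<tau>: "0 \<le> \<tau>" "\<tau> \<le> T"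
    and maximal: "\<forall>s'\<in>{- D / V..T}. \<forall>\<tau>'\<in>{0..T}. ramp_value s' \<tau>' \<le> ramp_value s \<tau>"
    using ramp_value_attains_max by auto
  have optimal: "r \<le> ramp_value s \<tau>" if "feasible_P6 D H beta0 P T V a1 a2 r x p1 p2" for r x p1 p2
    using feasible_le_ramp_value[OF that] maximal by (meson order_trans)
  have hover: "hfh D T V (ramp D V s) (ramp D V s 0) (ramp D V s T) (max 0 s) (max 0 (T - s - D / V))"
    by (rule hfh_ramp[OF D V less_imp_le[OF T] s])
  have "feasible_P6 D H beta0 P T V a1 a2 (ramp_value s \<tau>) (ramp D V s)
      (\<lambda>t. of_bool (t \<le> \<tau>)) (\<lambda>t. of_bool (\<tau> < t))"
    by (rule feasible_ramp[OF \<tau>])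
  with optimal hover hfh_cases[OF hover V ramp_hover_times[OF V less_imp_le[OF D] s]] show ?thesis
    by blast
qed

end
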